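(* Let $(X,d)\in\mathfrak U$. Then for every $r\in\operatorname{Sp}(X)$ the set $\mathbf B_X$ contains exactly one ball of radius $r$.
   Context: $\operatorname{Sp}(X)=\{d(x,y):x,y\in X,\ x\neq y\}$; $\mathfrak U$ is the class of finite ultrametric spaces $X$ with $|\operatorname{Sp}(X)|=|X|-1$. For $t\in X$ and $r\ge0$, $B_r(t)=\{x\in X: d(x,t)\leqslant r\}$; $\operatorname{Sp}_t(X)=\{d(x,t):x\in X,\ x\neq t\}$; $\mathbf B_X=\{B_r(t): t\in X,\ r\in\operatorname{Sp}_t(X)\}$. A ball of radius $r$ in $\mathbf B_X$ means a set $B_r(t)$ with $t\in X$ and $r\in\operatorname{Sp}_t(X)$. *)

theory Defs
  imports Complex_Main
begin

definition ultrametric_space :: "'a set \<Rightarrow> ('a \<Rightarrow> 'a \<Rightarrow> real) \<Rightarrow> bool" where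
  "ultrametric_space X d \<longleftrightarrow>
     (\<forall>x\<in>X. \<forall>y\<in>X. d x y \<ge> 0) \<and>
     (\<forall>x\<in>X. \<forall>y\<in>X. d x y = 0 \<longleftrightarrow> x = y) \<and>
     (\<forall>x\<in>X. \<forall>y\<in>X. d x y = d y x) \<and>
     (\<forall>x\<in>X. \<forall>y\<in>X. \<forall>z\<in>X. d x z \<le> max (d x y) (d y z))"

definition Sp :: "'a set \<Rightarrow> ('a \<Rightarrow> 'a \<Rightarrow> real) \<Rightarrow> real set" where
  "Sp X d = {d x y | x y. x \<in> X \<and> y \<in> X \<and> x \<noteq> y}"

definition Sp_at :: "'a set \<Rightarrow> ('a \<Rightarrow> 'a \<Rightarrow> real) \<Rightarrow> 'a \<Rightarrow> real set" where
  "Sp_at X d t = {d x t | x. x \<in> X \<and> x \<noteq> t}"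

definition closed_ball_in :: "'a set \<Rightarrow> ('a \<Rightarrow> 'a \<Rightarrow> real) \<Rightarrow> real \<Rightarrow> 'a \<Rightarrow> 'a set" where
  "closed_ball_in X d r t = {x \<in> X. d x t \<le> r}"

text \<open>The class \<open>\<frakU>\<close>: finite ultrametric spaces with |Sp(X)| = |X| - 1
  (written as |Sp(X)| + 1 = |X|, which also forces X nonempty).\<close>
definition class_U :: "'a set \<Rightarrow> ('a \<Rightarrow> 'a \<Rightarrow> real) \<Rightarrow> bool" where
  "class_U X d \<longleftrightarrow> finite X \<and> ultrametric_space X d \<and> card (Sp X d) + 1 = card X"

definition balls_of :: "'a set \<Rightarrow> ('a \<Rightarrow> 'a \<Rightarrow> real) \<Rightarrow> 'a set set" where
  "balls_of X d = {closed_ball_in X d r t | r t. t \<in> X \<and> r \<in> Sp_at X d t}"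

definition is_ball_of_radius :: "'a set \<Rightarrow> ('a \<Rightarrow> 'a \<Rightarrow> real) \<Rightarrow> real \<Rightarrow> 'a set \<Rightarrow> bool" where
  "is_ball_of_radius X d r B \<longleftrightarrow> (\<exists>t\<in>X. r \<in> Sp_at X d t \<and> B = closed_ball_in X d r t)"

end

theory Submission
  imports Defs
begin

text \<open>Adding a point x to a finite ultrametric space Y creates at most one new distance,
  namely the least distance m from x to Y: by the isosceles property every d x v > m
  equals d y0 v for a point y0 realising m. Hence |Sp X| \<le> |Sp Y| + |X - Y| for nonempty
  Y \<subseteq> X. If there were two distinct balls of radius r, with centres t1, t2 and points
  a1, a2 at distance r from them, then d t1 t2 > r and the four points t1, a1, t2, a2 span
  only the two distances r and d t1 t2, so |Sp X| \<le> 2 + (|X| - 4) < |X| - 1.\<close>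

lemma ultrametric_space_subset:
  "ultrametric_space X d \<Longrightarrow> Y \<subseteq> X \<Longrightarrow> ultrametric_space Y d"
  unfolding ultrametric_space_def by blast

lemma finite_Sp: "finite X \<Longrightarrow> finite (Sp X d)"
proof -
  assume "finite X"
  have "Sp X d \<subseteq> (\<lambda>(x, y). d x y) ` (X \<times> X)"
    unfolding Sp_def by auto
  then show ?thesis
    using \<open>finite X\<close> by (meson finite_SigmaI finite_imageI finite_subset)
qed

lemma ultrametric_isosceles:
  assumes "ultrametric_space X d" "a \<in> X" "b \<in> X" "c \<in> X" "d a b < d b c"
  shows "d a c = d b c"
proof -
  have "d a c \<le> max (d a b) (d b c)" "d b c \<le> max (d b a) (d a c)" "d b a = d a b"
    using assms unfolding ultrametric_space_def by blast+
  then show ?thesis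
    using assms(5) by (auto simp: max_def split: if_splits)
qed

lemma card_Sp_insert_le:
  assumes um: "ultrametric_space (insert x Y) d"
    and fin: "finite Y" and "Y \<noteq> {}" and "x \<notin> Y"
  shows "card (Sp (insert x Y) d) \<le> card (Sp Y d) + 1"
proof -
  define m where "m = Min ((\<lambda>y. d x y) ` Y)"
  have "m \<in> (\<lambda>y. d x y) ` Y"
    unfolding m_def using fin \<open>Y \<noteq> {}\<close> by (intro Min_in) auto
  then obtain y0 where y0: "y0 \<in> Y" "d x y0 = m"
    by auto
  have sym: "d u v = d v u" if "u \<in> insert x Y" "v \<in> insert x Y" for u v
    using um that unfolding ultrametric_space_def by blast
  have new_dist: "d x v \<in> Sp Y d \<union> {m}" if v: "v \<in> Y" for v
  proof (cases "d x v = m")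
    case False
    moreover have "m \<le> d x v"
      unfolding m_def using fin v by simp
    ultimately have "d y0 x < d x v"
      using y0 sym[of y0 x] by simp
    then have "d y0 v = d x v"
      using ultrametric_isosceles[OF um] v y0 by blast
    moreover have "d y0 v \<in> Sp Y d"
      using False y0 v unfolding Sp_def by blast
    ultimately show ?thesis
      by simp
  qed simp
  have "Sp (insert x Y) d \<subseteq> Sp Y d \<union> {m}"
  proof
    fix s assume "s \<in> Sp (insert x Y) d"
    then obtain u v where uv: "s = d u v" "u \<in> insert x Y" "v \<in> insert x Y" "u \<noteq> v"
      unfolding Sp_def by auto
    consider "u = x" | "v = x" | "u \<in> Y" "v \<in> Y"
      using uv by auto
    then show "s \<in> Sp Y d \<union> {m}"
    proof cases
      case 2
      then show ?thesis
        using uv sym new_dist by auto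
    qed (use uv new_dist in \<open>auto simp: Sp_def\<close>)
  qed
  then have "card (Sp (insert x Y) d) \<le> card (Sp Y d \<union> {m})"
    using finite_Sp[OF fin] by (intro card_mono) auto
  also have "\<dots> \<le> card (Sp Y d) + 1"
    using card_Un_le[of "Sp Y d" "{m}"] by simp
  finally show ?thesis .
qed

lemma card_Sp_le_card_Sp_subset_add_card_Diff:
  assumes "ultrametric_space X d" "finite X" "Y \<subseteq> X" "Y \<noteq> {}"
  shows "card (Sp X d) \<le> card (Sp Y d) + card (X - Y)"
proof -
  have "ultrametric_space (A \<union> Y) d \<Longrightarrow>
      card (Sp (A \<union> Y) d) \<le> card (Sp Y d) + card (A - Y)" if "finite A" for A
    using that
  proof (induction A rule: finite_induct)
    case (insert a A)
    have IH: "card (Sp (A \<union> Y) d) \<le> card (Sp Y d) + card (A - Y)"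
      using insert.IH insert.prems ultrametric_space_subset by blast
    show ?case
    proof (cases "a \<in> Y")
      case True
      then show ?thesis
        using IH by (simp add: insert_absorb)
    next
      case False
      then have "card (Sp (insert a (A \<union> Y)) d) \<le> card (Sp (A \<union> Y) d) + 1"
        using insert assms finite_subset[of Y X]
        by (intro card_Sp_insert_le) auto
      moreover have "card (insert a A - Y) = card (A - Y) + 1"
        using False insert.hyps by (simp add: insert_Diff_if)
      ultimately show ?thesis
        using IH by simp
    qed
  qed simp
  moreover have "X = (X - Y) \<union> Y" "(X - Y) - Y = X - Y"
    using assms by auto
  ultimately show ?thesis
    using assms by (metis finite_Diff)
qed

lemma closed_ball_in_eq:
  assumes "ultrametric_space X d" "t1 \<in> X" "t2 \<in> X" "d t1 t2 \<le> r"
  shows "closed_ball_in X d r t1 = closed_ball_in X d r t2"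
proof -
  have "d z t2 \<le> max (d z t1) (d t1 t2)" "d z t1 \<le> max (d z t2) (d t2 t1)"
    if "z \<in> X" for z
    using assms that unfolding ultrametric_space_def by blast+
  moreover have "d t2 t1 = d t1 t2"
    using assms unfolding ultrametric_space_def by blast
  ultimately show ?thesis
    using assms(4) unfolding closed_ball_in_def by fastforce
qed

lemma card_Sp_add_two_le_if_far_centres:
  assumes um: "ultrametric_space X d" and fin: "finite X"
    and in_X: "t1 \<in> X" "a1 \<in> X" "t2 \<in> X" "a2 \<in> X"
    and "a1 \<noteq> t1" "a2 \<noteq> t2" and r1: "d a1 t1 = r" and r2: "d a2 t2 = r" and far: "r < d t1 t2"
  shows "card (Sp X d) + 2 \<le> card X"
proof -
  define D where "D = d t1 t2"
  have sym: "d u v = d v u" if "u \<in> X" "v \<in> X" for u v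
    using um that unfolding ultrametric_space_def by blast
  have zero: "d u u = 0" if "u \<in> X" for u
    using um that unfolding ultrametric_space_def by blast
  have "r \<ge> 0"
    using um in_X r1 unfolding ultrametric_space_def by blast
  have iso: "d a c = d b c" if "a \<in> X" "b \<in> X" "c \<in> X" "d a b < d b c" for a b c
    using ultrametric_isosceles[OF um that] .
  have e1: "d a1 t2 = D"
    using iso[of a1 t1 t2] in_X r1 far unfolding D_def by simp
  have e2: "d t1 a2 = D"
  proof -
    have "d a2 t1 = d t2 t1"
      using iso[of a2 t2 t1] in_X r2 far sym[of t2 t1] by simp
    then show ?thesis
      using sym[of a2 t1] sym[of t2 t1] in_X unfolding D_def by simp
  qed
  have e3: "d a1 a2 = D"
    using iso[of a1 t1 a2] in_X r1 e2 far unfolding D_def by simp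
  define Y where "Y = {t1, a1, t2, a2}"
  have "0 < D"
    using far \<open>r \<ge> 0\<close> unfolding D_def by simp
  then have "t1 \<noteq> t2" "a1 \<noteq> t2" "t1 \<noteq> a2" "a1 \<noteq> a2"
    using zero in_X e1 e2 e3 unfolding D_def by auto
  then have card_Y: "card Y = 4"
    using \<open>a1 \<noteq> t1\<close> \<open>a2 \<noteq> t2\<close> unfolding Y_def by auto
  have "d t1 a1 = r" "d t2 a2 = r" "d t2 t1 = D" "d t2 a1 = D" "d a2 t1 = D" "d a2 a1 = D"
    using sym[of a1 t1] sym[of a2 t2] sym[of t1 t2] sym[of a1 t2] sym[of t1 a2] sym[of a1 a2]
      in_X r1 r2 e1 e2 e3 unfolding D_def by simp_all
  then have "Sp Y d \<subseteq> {r, D}"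
    using r1 r2 e1 e2 e3 unfolding Y_def Sp_def D_def by auto
  then have "card (Sp Y d) \<le> card {r, D}"
    by (intro card_mono) auto
  also have "\<dots> \<le> 2"
    by (simp add: card_insert_if)
  finally have "card (Sp Y d) \<le> 2" .
  moreover have "Y \<subseteq> X"
    using in_X unfolding Y_def by auto
  moreover have "card (Sp X d) \<le> card (Sp Y d) + card (X - Y)"
    using card_Sp_le_card_Sp_subset_add_card_Diff[OF um fin \<open>Y \<subseteq> X\<close>]
    unfolding Y_def by auto
  ultimately show ?thesis
    using card_Y fin card_mono[OF fin \<open>Y \<subseteq> X\<close>] by (simp add: card_Diff_subset finite_subset)
qed

theorem lemma22:
  fixes X :: "'a set" and d :: "'a \<Rightarrow> 'a \<Rightarrow> real"
  assumes "class_U X d"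
    and "r \<in> Sp X d"
  shows "\<exists>!B. B \<in> balls_of X d \<and> is_ball_of_radius X d r B"
proof -
  have fin: "finite X" and um: "ultrametric_space X d" and card_X: "card (Sp X d) + 1 = card X"
    using assms(1) unfolding class_U_def by auto
  obtain x y where "r = d x y" "x \<in> X" "y \<in> X" "x \<noteq> y"
    using assms(2) unfolding Sp_def by auto
  then have "is_ball_of_radius X d r (closed_ball_in X d r y)"
    unfolding is_ball_of_radius_def Sp_at_def by blast
  moreover have "is_ball_of_radius X d r B \<Longrightarrow> B \<in> balls_of X d" for B
    unfolding is_ball_of_radius_def balls_of_def by blast
  moreover have "B1 = B2" 
    if ball1: "is_ball_of_radius X d r B1" and ball2: "is_ball_of_radius X d r B2" for B1 B2
  proof -
    obtain t1 a1 where t1: "t1 \<in> X" "a1 \<in> X" "a1 \<noteq> t1" "d a1 t1 = r"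
      and B1: "B1 = closed_ball_in X d r t1"
      using ball1 unfolding is_ball_of_radius_def Sp_at_def by blast
    obtain t2 a2 where t2: "t2 \<in> X" "a2 \<in> X" "a2 \<noteq> t2" "d a2 t2 = r"
      and B2: "B2 = closed_ball_in X d r t2"
      using ball2 unfolding is_ball_of_radius_def Sp_at_def by blast
    have "\<not> r < d t1 t2"
      using card_Sp_add_two_le_if_far_centres[OF um fin t1(1,2) t2(1,2) t1(3) t2(3) t1(4) t2(4)]
        card_X by linarith
    then show ?thesis
      using closed_ball_in_eq[OF um t1(1) t2(1)] B1 B2 by simp
  qed
  ultimately show ?thesis
    by blast
qed

end
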